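(* Under the hypotheses of the existence setting (see context), let $e\in W^{s,G}(\mathbb{R}^N)$ be a fixed nonnegative function, independent of $\lambda$, with $\|e\|_{G_{N/s}}>0$ and $I_\lambda(e)<0$ for the relevant $\lambda$ (as provided by the mountain pass geometry), and for $\lambda>0$ let $$c_\lambda=\inf_{\gamma\in\Gamma}\max_{t\in[0,1]}I_\lambda(\gamma(t)),\qquad \Gamma=\{\gamma\in C([0,1],W^{s,G}(\mathbb{R}^N)):\gamma(0)=0,\ \gamma(1)=e\}.$$ Then $\lim_{\lambda\to\infty}c_\lambda=0$.
   Context: A Young function is $G(t)=\int_0^t g(\tau)\,d\tau$, with $g$ right-continuous, nondecreasing, $g(0)=0$, $g>0$ on $(0,\infty)$, $g(t)\to\infty$. (G1): $1<p^-\le \frac{tg(t)}{G(t)}\le p^+<\infty$ for all $t>0$. (G2): $\int^{\infty}(t/G(t))^{\frac{s}{N-s}}dt=\infty$; (G3): $\int_0(t/G(t))^{\frac{s}{N-s}}dt<\infty$. $H(t)=\big(\int_0^t(\tau/G(\tau))^{\frac{s}{N-s}}d\tau\big)^{\frac{N-s}{s}}$, $G_{\frac{N}{s}}=G\circ H^{-1}$. $N\ge2$, $s\in(0,1)$, $sp^-<N$, $p_*^-=\frac{Np^-}{N-sp^-}$. $D^su(x,y)=\frac{u(x)-u(y)}{|x-y|^s}$, $\Phi_G(u)=\int G(|u|)dx$, $\Phi_{s,G}(u)=\iint G(|D^su|)\frac{dxdy}{|x-y|^N}$, $\rho=\Phi_G+\Phi_{s,G}$, $W^{s,G}(\mathbb{R}^N)=\{u:\rho(u)<\infty\}$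 with $\|u\|_{s,G}=\inf\{\lambda>0:\rho(u/\lambda)\le1\}$; for a Young function $A$, $\|u\|_A=\inf\{\lambda>0:\int A(|u|/\lambda)\le1\}$. $f:\mathbb{R}\to\mathbb{R}$ continuous with (f1) $\lim_{t\to0}f(t)/g(t)=0$; (f2) $\limsup_{t\to\infty}|f(t)|/m(|t|)<\infty$, where $m$ is continuous, $M(t)=\int_0^tm$ is a Young function and $0<m^-\le tm(t)/M(t)\le m^+$ with $p^+<m^-<m^+<p_*^-$; (f3) there is $\theta>p^+$ with $0<\theta F(t)\le f(t)t$ for $t\ne0$, $F(t)=\int_0^tf$. $I_\lambda(u)=\Phi_{s,G}(u)+\Phi_G(u)-\int G_{\frac{N}{s}}(|u|)dx-\lambda\int F(u)dx$. *)

theory Defs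
  imports "HOL-Analysis.Analysis"
begin

definition young_density :: "(real \<Rightarrow> real) \<Rightarrow> bool" where
  "young_density g \<longleftrightarrow>
     (\<forall>t\<ge>0. continuous (at_right t) g) \<and> mono_on {0..} g \<and> g 0 = 0 \<and>
     (\<forall>t>0. g t > 0) \<and> filterlim g at_top at_top"

definition prim :: "(real \<Rightarrow> real) \<Rightarrow> real \<Rightarrow> real" where
  "prim g t = (LBINT \<tau>=0..t. g \<tau>)"

definition Hfun :: "(real \<Rightarrow> real) \<Rightarrow> real \<Rightarrow> real \<Rightarrow> real \<Rightarrow> real" where
  "Hfun g s N t = (LBINT \<tau>=0..t. (\<tau> / prim g \<tau>) powr (s / (N - s))) powr ((N - s) / s)"

definition GNs :: "(real \<Rightarrow> real) \<Rightarrow> real \<Rightarrow> real \<Rightarrow> real \<Rightarrow> real" where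
  "GNs g s N t = prim g (the_inv_into {0..} (Hfun g s N) t)"

definition Phi_G :: "(real \<Rightarrow> real) \<Rightarrow> ('a::euclidean_space \<Rightarrow> real) \<Rightarrow> ennreal" where
  "Phi_G G u = (\<integral>\<^sup>+ x. ennreal (G \<bar>u x\<bar>) \<partial>lborel)"

definition Phi_sG :: "(real \<Rightarrow> real) \<Rightarrow> real \<Rightarrow> ('a::euclidean_space \<Rightarrow> real) \<Rightarrow> ennreal" where
  "Phi_sG G s u = (\<integral>\<^sup>+ z. ennreal (G (\<bar>u (fst z) - u (snd z)\<bar> / dist (fst z) (snd z) powr s)
        / dist (fst z) (snd z) powr real DIM('a)) \<partial>(lborel \<Otimes>\<^sub>M lborel))"

definition rho :: "(real \<Rightarrow> real) \<Rightarrow> real \<Rightarrow> ('a::euclidean_space \<Rightarrow> real) \<Rightarrow> ennreal" where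
  "rho G s u = Phi_G G u + Phi_sG G s u"

definition Wspace :: "(real \<Rightarrow> real) \<Rightarrow> real \<Rightarrow> ('a::euclidean_space \<Rightarrow> real) set" where
  "Wspace G s = {u. u \<in> borel_measurable lborel \<and> rho G s u < \<infinity>}"

definition sG_norm :: "(real \<Rightarrow> real) \<Rightarrow> real \<Rightarrow> ('a::euclidean_space \<Rightarrow> real) \<Rightarrow> real" where
  "sG_norm G s u = Inf {l. l > 0 \<and> rho G s (\<lambda>x. u x / l) \<le> 1}"

definition orlicz_norm :: "(real \<Rightarrow> real) \<Rightarrow> ('a::euclidean_space \<Rightarrow> real) \<Rightarrow> real" where
  "orlicz_norm A u = Inf {l. l > 0 \<and> (\<integral>\<^sup>+ x. ennreal (A (\<bar>u x\<bar> / l)) \<partial>lborel) \<le> 1}"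

definition I_fun :: "(real \<Rightarrow> real) \<Rightarrow> (real \<Rightarrow> real) \<Rightarrow> real \<Rightarrow> real \<Rightarrow> ('a::euclidean_space \<Rightarrow> real) \<Rightarrow> real" where
  "I_fun g f s lam u =
     (\<integral>z. prim g (\<bar>u (fst z) - u (snd z)\<bar> / dist (fst z) (snd z) powr s)
        / dist (fst z) (snd z) powr real DIM('a) \<partial>(lborel \<Otimes>\<^sub>M lborel))
     + (\<integral>x. prim g \<bar>u x\<bar> \<partial>lborel)
     - (\<integral>x. GNs g s (real DIM('a)) \<bar>u x\<bar> \<partial>lborel)
     - lam * (\<integral>x. prim f (u x) \<partial>lborel)"

definition Gamma_paths :: "(real \<Rightarrow> real) \<Rightarrow> real \<Rightarrow> ('a::euclidean_space \<Rightarrow> real) \<Rightarrow> (real \<Rightarrow> 'a \<Rightarrow> real) set" where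
  "Gamma_paths g s e = {\<gamma>. \<gamma> 0 = (\<lambda>x. 0) \<and> \<gamma> 1 = e \<and>
      (\<forall>t\<in>{0..1}. \<gamma> t \<in> Wspace (prim g) s) \<and>
      (\<forall>t0\<in>{0..1}. ((\<lambda>t. sG_norm (prim g) s (\<lambda>x. \<gamma> t x - \<gamma> t0 x)) \<longlongrightarrow> 0) (at t0 within {0..1}))}"

definition mp_level :: "(real \<Rightarrow> real) \<Rightarrow> (real \<Rightarrow> real) \<Rightarrow> real \<Rightarrow> ('a::euclidean_space \<Rightarrow> real) \<Rightarrow> real \<Rightarrow> real" where
  "mp_level g f s e lam = (INF \<gamma>\<in>Gamma_paths g s e. SUP t\<in>{0..1}. I_fun g f s lam (\<gamma> t))"

end

theory Submission
  imports Defs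
begin

text \<open>
  Every admissible path starts at \<open>0\<close>, where \<open>I\<^sub>\<lambda>\<close> vanishes, so \<open>c\<^sub>\<lambda> \<ge> 0\<close>; the supremum along
  a path is finite because the modular \<open>\<rho>\<close> stays bounded along norm-continuous paths, and
  \<open>I\<^sub>\<lambda>(u) \<le> \<rho>(u) - \<lambda> \<integral>F(u)\<close> since the critical term is nonnegative.

  For the upper bound use the truncation path \<open>t \<mapsto> min(e, t/(1-t))\<close>. For small \<open>t\<close> its
  modular, hence \<open>I\<^sub>\<lambda>\<close>, is below \<open>\<epsilon>\<close> by dominated convergence, uniformly in \<open>\<lambda>\<close>. For the
  remaining \<open>t < 1\<close> the modular is at most \<open>\<rho>(e)\<close>, while \<open>\<integral>F(min(e,k))\<close> is bounded away
  from \<open>0\<close> (\<open>F \<le> C G\<close> on bounded sets makes it finite, and \<open>e\<close> is not a.e. zero), so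
  \<open>I\<^sub>\<lambda> \<le> 0\<close> there for large \<open>\<lambda>\<close>. At \<open>t = 1\<close> the value is \<open>I\<^sub>\<lambda>(e) < 0\<close>.
\<close>

lemma borel_measurable_mono_on_comp:
  fixes \<phi> :: "real \<Rightarrow> real"
  assumes "mono_on {0..} \<phi>" "h \<in> borel_measurable M" "\<And>x. 0 \<le> h x"
  shows "(\<lambda>x. \<phi> (h x)) \<in> borel_measurable M"
proof -
  have "mono (\<lambda>x. \<phi> (max 0 x))"
    using assms(1) by (auto simp: mono_def mono_on_def)
  then have "(\<lambda>x. \<phi> (max 0 x)) \<in> borel_measurable borel"
    by (rule borel_measurable_mono)
  from measurable_compose[OF assms(2) this] show ?thesis
    using assms(3) by (simp add: max_absorb2)
qed

lemma integral_le_enn2real_nn_integral: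
  fixes f :: "'a \<Rightarrow> real"
  assumes "\<And>x. 0 \<le> f x"
  shows "integral\<^sup>L M f \<le> enn2real (\<integral>\<^sup>+ x. ennreal (f x) \<partial>M)"
proof (cases "integrable M f")
  case True
  then show ?thesis using integral_eq_nn_integral[of f M] assms by auto
qed (simp add: not_integrable_integral_eq)

lemma nn_integral_le_cmult_add:
  fixes F f h :: "'a \<Rightarrow> real"
  assumes [measurable]: "(\<lambda>x. ennreal (f x)) \<in> borel_measurable M" "(\<lambda>x. ennreal (h x)) \<in> borel_measurable M"
    and "\<And>x. F x \<le> K * (f x + h x)" "0 \<le> K" "\<And>x. 0 \<le> f x" "\<And>x. 0 \<le> h x"
  shows "(\<integral>\<^sup>+ x. ennreal (F x) \<partial>M) \<le>
    ennreal K * ((\<integral>\<^sup>+ x. ennreal (f x) \<partial>M) + (\<integral>\<^sup>+ x. ennreal (h x) \<partial>M))"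
proof -
  have "(\<integral>\<^sup>+ x. ennreal (F x) \<partial>M) \<le> (\<integral>\<^sup>+ x. ennreal K * (ennreal (f x) + ennreal (h x)) \<partial>M)"
    using assms by (intro nn_integral_mono) (metis ennreal_leI ennreal_mult ennreal_plus add_nonneg_nonneg)
  also have "\<dots> = ennreal K * (\<integral>\<^sup>+ x. ennreal (f x) + ennreal (h x) \<partial>M)"
    by (rule nn_integral_cmult) measurable
  also have "(\<integral>\<^sup>+ x. ennreal (f x) + ennreal (h x) \<partial>M) =
      (\<integral>\<^sup>+ x. ennreal (f x) \<partial>M) + (\<integral>\<^sup>+ x. ennreal (h x) \<partial>M)"
    by (rule nn_integral_add) measurable
  finally show ?thesis .
qed

lemma nn_integral_dominated_tendsto_zero:
  fixes u :: "nat \<Rightarrow> 'a \<Rightarrow> ennreal"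
  assumes "\<And>n. u n \<in> borel_measurable M" "w \<in> borel_measurable M"
    and "\<And>n x. u n x \<le> w x" "(\<integral>\<^sup>+ x. w x \<partial>M) < \<infinity>" "\<And>x. (\<lambda>n. u n x) \<longlonglongrightarrow> 0"
  shows "(\<lambda>n. \<integral>\<^sup>+ x. u n x \<partial>M) \<longlonglongrightarrow> 0"
  using nn_integral_dominated_convergence[of u M "\<lambda>x. 0" w] assms by auto

lemma compact_locally_bounded_ennreal:
  fixes h :: "'a::topological_space \<Rightarrow> ennreal"
  assumes "compact S"
    and loc: "\<And>t0. t0 \<in> S \<Longrightarrow> \<exists>b<\<infinity>. eventually (\<lambda>t. h t \<le> b) (at t0 within S)"
    and fin: "\<And>t0. t0 \<in> S \<Longrightarrow> h t0 < \<infinity>"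
  shows "\<exists>B<\<infinity>. \<forall>t\<in>S. h t \<le> B"
proof -
  have "\<exists>U b. open U \<and> t0 \<in> U \<and> b < \<infinity> \<and> (\<forall>t\<in>U \<inter> S. h t \<le> b)" if t0: "t0 \<in> S" for t0
  proof -
    obtain b where b: "b < \<infinity>" "eventually (\<lambda>t. h t \<le> b) (at t0 within S)"
      using loc[OF t0] by blast
    then obtain U where U: "open U" "t0 \<in> U" "\<And>t. t \<in> U \<Longrightarrow> t \<in> S \<Longrightarrow> t \<noteq> t0 \<Longrightarrow> h t \<le> b"
      unfolding eventually_at_topological by blast
    have "\<forall>t\<in>U \<inter> S. h t \<le> b + h t0"
    proof
      fix t assume "t \<in> U \<inter> S"
      then show "h t \<le> b + h t0"
        using U(3)[of t] by (cases "t = t0") (auto intro: add_increasing add_increasing2)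
    qed
    moreover have "b + h t0 < \<infinity>"
      using b fin[OF t0] by (simp add: ennreal_add_less_top)
    ultimately show ?thesis using U by blast
  qed
  then obtain U b where Ub: "\<And>t0. t0 \<in> S \<Longrightarrow> open (U t0) \<and> t0 \<in> U t0 \<and> b t0 < \<infinity> \<and>
      (\<forall>t\<in>U t0 \<inter> S. h t \<le> b t0)"
    by metis
  obtain C where C: "C \<subseteq> S" "finite C" "S \<subseteq> (\<Union>c\<in>C. U c)"
    by (rule compactE_image[OF assms(1), of S U]) (use Ub in auto)
  show ?thesis
  proof (intro exI[of _ "\<Sum>c\<in>C. b c"] conjI ballI)
    show "(\<Sum>c\<in>C. b c) < \<infinity>" using Ub C by (auto simp: less_top)
    fix t assume t: "t \<in> S"
    then obtain c where c: "c \<in> C" "t \<in> U c" using C by auto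
    then have "h t \<le> b c" using Ub[of c] C t by auto
    also have "\<dots> \<le> (\<Sum>c\<in>C. b c)" by (rule member_le_sum) (use c C in auto)
    finally show "h t \<le> (\<Sum>c\<in>C. b c)" .
  qed
qed

section \<open>Young functions\<close>

locale young_fun =
  fixes g :: "real \<Rightarrow> real"
  assumes young: "young_density g"
begin

lemma g_mono: "0 \<le> x \<Longrightarrow> x \<le> y \<Longrightarrow> g x \<le> g y"
  using young unfolding young_density_def mono_on_def by auto

lemma g_pos: "0 < x \<Longrightarrow> 0 < g x"
  using young unfolding young_density_def by auto

lemma g_zero [simp]: "g 0 = 0"
  using young unfolding young_density_def by auto

lemma g_nonneg: "0 \<le> x \<Longrightarrow> 0 \<le> g x"
  using g_pos[of x] by (cases "x = 0") auto

lemma set_integrable_g: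
  assumes "0 \<le> a"
  shows "set_integrable lborel {a..b} g"
proof -
  define g' where "g' = (\<lambda>x. g (max 0 x))"
  have "mono g'" unfolding mono_def g'_def using g_mono by auto
  then have [measurable]: "g' \<in> borel_measurable borel" by (rule borel_measurable_mono)
  have "set_integrable lborel {a..b} g'"
  proof (rule set_integrable_bound[where f="\<lambda>_. g' b"])
    show "set_integrable lborel {a..b} (\<lambda>_. g' b)"
      by (rule borel_integrable_atLeastAtMost') auto
    show "set_borel_measurable lborel {a..b} g'"
      unfolding set_borel_measurable_def by measurable
    show "AE x in lborel. x \<in> {a..b} \<longrightarrow> norm (g' x) \<le> norm (g' b)"
      using assms g_mono g_nonneg by (auto simp: g'_def)
  qed
  then show ?thesis
    by (rule set_integrable_cong[THEN iffD1, rotated -1]) (use assms in \<open>auto simp: g'_def\<close>)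
qed

lemma g_integrable_on: "0 \<le> a \<Longrightarrow> g integrable_on {a..b}"
  using set_borel_integral_eq_integral(1)[OF set_integrable_g] by blast

lemma prim_eq_integral: "0 \<le> t \<Longrightarrow> prim g t = integral {0..t} g"
  using interval_integral_eq_integral[of 0 t g] set_integrable_g[of 0 t]
  by (simp add: prim_def zero_ereal_def)

lemma prim_diff_eq_integral: "0 \<le> x \<Longrightarrow> x \<le> y \<Longrightarrow> prim g y - prim g x = integral {x..y} g"
  using Henstock_Kurzweil_Integration.integral_combine[where a=0 and c=x and b=y and f=g]
    g_integrable_on[of 0 y] prim_eq_integral[of x] prim_eq_integral[of y]
  by auto

lemma prim_diff_bounds:
  assumes "0 \<le> x" "x \<le> y"
  shows "(y - x) * g x \<le> prim g y - prim g x" "prim g y - prim g x \<le> (y - x) * g y"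
proof -
  have i: "g integrable_on {x..y}" using assms g_integrable_on by auto
  have "integral {x..y} (\<lambda>_. g x) \<le> integral {x..y} g"
    by (rule integral_le) (use i assms g_mono in auto)
  then show "(y - x) * g x \<le> prim g y - prim g x"
    using prim_diff_eq_integral[OF assms] assms by simp
  have "integral {x..y} g \<le> integral {x..y} (\<lambda>_. g y)"
    by (rule integral_le) (use i assms g_mono in auto)
  then show "prim g y - prim g x \<le> (y - x) * g y"
    using prim_diff_eq_integral[OF assms] assms by simp
qed

lemma prim_zero [simp]: "prim g 0 = 0"
  using prim_eq_integral[of 0] by simp

lemma prim_mono: "0 \<le> x \<Longrightarrow> x \<le> y \<Longrightarrow> prim g x \<le> prim g y"
  using prim_diff_bounds(1)[of x y] g_nonneg[of x] by (smt (verit) mult_nonneg_nonneg)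

lemma prim_nonneg: "0 \<le> x \<Longrightarrow> 0 \<le> prim g x"
  using prim_mono[of 0 x] by simp

lemma prim_pos: "0 < x \<Longrightarrow> 0 < prim g x"
  using prim_diff_bounds(1)[of "x/2" x] prim_nonneg[of "x/2"] g_pos[of "x/2"]
  by (smt (verit) field_sum_of_halves mult_pos_pos)

lemma prim_le_mult_g: "0 \<le> x \<Longrightarrow> prim g x \<le> x * g x"
  using prim_diff_bounds(2)[of 0 x] by simp

text \<open>Convexity of \<open>G\<close> with \<open>G 0 = 0\<close>, via \<open>x G(cx) \<le> cx G(x)\<close>.\<close>

lemma prim_mult_le:
  assumes c: "0 \<le> c" "c \<le> 1" and x: "0 \<le> x"
  shows "prim g (c * x) \<le> c * prim g x"
proof (cases "c * x = 0")
  case False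
  define y where "y = c * x"
  have y: "0 < y" "y \<le> x" "0 < x"
    using False c x by (auto simp: y_def mult_left_le_one_le less_le)
  have A: "(x - y) * g y \<le> prim g x - prim g y" "prim g y \<le> y * g y"
    using prim_diff_bounds(1)[of y x] prim_le_mult_g[of y] y by auto
  have "prim g y * (x - y) \<le> (y * g y) * (x - y)"
    using A(2) y by (intro mult_right_mono) auto
  also have "\<dots> = y * ((x - y) * g y)" by (simp only: mult_ac)
  also have "\<dots> \<le> y * (prim g x - prim g y)"
    using A(1) y by (intro mult_left_mono) auto
  finally have "prim g y * x \<le> (c * prim g x) * x"
    by (simp add: y_def algebra_simps)
  then show ?thesis
    using y unfolding y_def by simp
next
  case True
  then have "prim g (c * x) = 0" by (auto simp del: mult_eq_0_iff)
  then show ?thesis using c x prim_nonneg[of x] by simp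
qed

lemma prim_tendsto_zero:
  assumes "(a \<longlongrightarrow> 0) F" "\<forall>\<^sub>F n in F. 0 \<le> a n"
  shows "((\<lambda>n. prim g (a n)) \<longlongrightarrow> 0) F"
proof (rule tendsto_sandwich[where f="\<lambda>_. 0" and h="\<lambda>n. a n * g 1"])
  have "\<forall>\<^sub>F n in F. a n < 1" using assms(1) by (rule order_tendstoD) simp
  with assms(2) show "\<forall>\<^sub>F n in F. prim g (a n) \<le> a n * g 1"
  proof eventually_elim
    case (elim n)
    then have "a n * g (a n) \<le> a n * g 1"
      using g_mono[of "a n" 1] by (intro mult_left_mono) auto
    then show ?case using prim_le_mult_g[of "a n"] elim by linarith
  qed
  show "\<forall>\<^sub>F n in F. 0 \<le> prim g (a n)" using assms(2) by eventually_elim (rule prim_nonneg)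
  show "((\<lambda>n. a n * g 1) \<longlongrightarrow> 0) F" using tendsto_mult[OF assms(1) tendsto_const] by simp
qed simp

lemma borel_measurable_prim_comp:
  "h \<in> borel_measurable M \<Longrightarrow> (\<And>x. 0 \<le> h x) \<Longrightarrow> (\<lambda>x. prim g (h x)) \<in> borel_measurable M"
  by (rule borel_measurable_mono_on_comp) (auto simp: mono_on_def intro: prim_mono)

end

text \<open>The upper bound \<open>t g(t) \<le> p G(t)\<close> of (G1) is the \<open>\<Delta>\<^sub>2\<close>-condition in disguise.\<close>

locale young_fun_Delta2 = young_fun +
  fixes p :: real
  assumes p_pos: "0 < p"
    and growth: "\<forall>t>0. t * g t / prim g t \<le> p"
begin

lemma prim_Delta2_step:
  assumes x: "0 \<le> x"
  shows "prim g ((1 + 1 / (2 * p)) * x) \<le> 2 * prim g x"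
proof (cases "x = 0")
  case False
  define h where "h = 1 / (2 * p)"
  have h: "0 < h" "h * p = 1 / 2" using p_pos by (simp_all add: h_def)
  define y where "y = (1 + h) * x"
  have y: "0 < y" "x \<le> y" "y - x = h * x"
    unfolding y_def using x False h(1) by (simp_all add: distrib_right add_pos_nonneg)
  have "y * g y \<le> p * prim g y"
    using growth y(1) prim_pos[of y] by (auto simp: pos_divide_le_eq mult.commute)
  have "(y - x) * g y \<le> (h * y) * g y"
    unfolding y(3) using h(1) y g_nonneg[of y] by (intro mult_right_mono) auto
  also have "\<dots> = h * (y * g y)" by (simp only: mult.assoc)
  also have "\<dots> \<le> h * (p * prim g y)"
    using h(1) \<open>y * g y \<le> p * prim g y\<close> by (intro mult_left_mono) auto
  also have "\<dots> = prim g y / 2"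
    by (simp only: mult.assoc[symmetric] h(2))
  finally show ?thesis
    using prim_diff_bounds(2)[OF x y(2)] by (simp add: y_def h_def)
qed simp

lemma prim_doubling:
  assumes "1 \<le> c"
  shows "\<exists>K>0. \<forall>x\<ge>0. prim g (c * x) \<le> K * prim g x"
proof -
  define q where "q = 1 + 1 / (2 * p)"
  have q: "1 < q" using p_pos by (simp add: q_def)
  have iter: "prim g (q ^ n * x) \<le> 2 ^ n * prim g x" if "0 \<le> x" for n x
  proof (induction n)
    case (Suc n)
    have "prim g (q ^ Suc n * x) \<le> 2 * prim g (q ^ n * x)"
      using prim_Delta2_step[of "q ^ n * x"] q that by (simp add: q_def mult.assoc)
    then show ?case using Suc by simp
  qed simp
  obtain n where n: "c < q ^ n" using real_arch_pow[OF q] by blast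
  have "prim g (c * x) \<le> 2 ^ n * prim g x" if "0 \<le> x" for x
    using prim_mono[of "c * x" "q ^ n * x"] iter[OF that, of n] assms n that
    by (smt (verit) mult_right_mono mult_nonneg_nonneg)
  then show ?thesis by (intro exI[of _ "2 ^ n"]) auto
qed

definition Delta2_const :: real where
  "Delta2_const = (SOME K. 0 < K \<and> (\<forall>x\<ge>0. prim g (2 * x) \<le> K * prim g x))"

lemma Delta2_const: "0 < Delta2_const" "0 \<le> x \<Longrightarrow> prim g (2 * x) \<le> Delta2_const * prim g x"
  using someI_ex[OF prim_doubling[of 2]] unfolding Delta2_const_def by auto

lemma prim_le_add:
  assumes "0 \<le> a" "0 \<le> b" "0 \<le> c" "a \<le> b + c"
  shows "prim g a \<le> Delta2_const * (prim g b + prim g c)"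
proof -
  have "prim g a \<le> prim g (2 * max b c)"
    using assms by (intro prim_mono) auto
  also have "\<dots> \<le> Delta2_const * prim g (max b c)"
    using Delta2_const(2)[of "max b c"] assms by simp
  also have "\<dots> \<le> Delta2_const * (prim g b + prim g c)"
    using Delta2_const(1) prim_nonneg assms by (intro mult_left_mono) (auto simp: max_def)
  finally show ?thesis .
qed

end

section \<open>The modular \<open>\<rho>\<close> and the norm of \<open>W\<^sup>s\<^sup>,\<^sup>G\<close>\<close>

definition frac_quot :: "real \<Rightarrow> ('a::metric_space \<Rightarrow> real) \<Rightarrow> 'a \<times> 'a \<Rightarrow> real" where
  "frac_quot s u z = \<bar>u (fst z) - u (snd z)\<bar> / dist (fst z) (snd z) powr s"

lemma frac_quot_nonneg: "0 \<le> frac_quot s u z"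
  by (simp add: frac_quot_def)

lemma frac_quot_const [simp]: "frac_quot s (\<lambda>x. c) z = 0"
  by (simp add: frac_quot_def)

lemma borel_measurable_frac_quot [measurable]:
  fixes u :: "'a::euclidean_space \<Rightarrow> real"
  assumes [measurable]: "u \<in> borel_measurable lborel"
  shows "frac_quot s u \<in> borel_measurable (lborel \<Otimes>\<^sub>M lborel)"
  unfolding frac_quot_def by measurable

lemma Phi_sG_frac_quot:
  fixes u :: "'a::euclidean_space \<Rightarrow> real"
  shows "Phi_sG G s u = (\<integral>\<^sup>+ z. ennreal (G (frac_quot s u z) / dist (fst z) (snd z) powr real DIM('a))
    \<partial>(lborel \<Otimes>\<^sub>M lborel))"
  by (simp add: Phi_sG_def frac_quot_def)

context young_fun
begin

lemma Phi_G_integrand_measurable: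
  fixes u :: "'a::euclidean_space \<Rightarrow> real"
  assumes [measurable]: "u \<in> borel_measurable lborel"
  shows "(\<lambda>x. ennreal (prim g \<bar>u x\<bar>)) \<in> borel_measurable lborel"
proof -
  have [measurable]: "(\<lambda>x. prim g \<bar>u x\<bar>) \<in> borel_measurable lborel"
    by (rule borel_measurable_prim_comp) auto
  show ?thesis by measurable
qed

lemma Phi_sG_integrand_measurable:
  fixes u :: "'a::euclidean_space \<Rightarrow> real"
  assumes [measurable]: "u \<in> borel_measurable lborel"
  shows "(\<lambda>z. ennreal (prim g (frac_quot s u z) / dist (fst z) (snd z) powr real DIM('a)))
    \<in> borel_measurable (lborel \<Otimes>\<^sub>M lborel)"
proof -
  have [measurable]: "(\<lambda>z. prim g (frac_quot s u z)) \<in> borel_measurable (lborel \<Otimes>\<^sub>M lborel)"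
    by (rule borel_measurable_prim_comp) (auto simp: frac_quot_nonneg)
  show ?thesis by measurable
qed

lemma rho_zero: "rho (prim g) s (\<lambda>x::'a::euclidean_space. 0) = 0"
  by (simp add: rho_def Phi_G_def Phi_sG_def)

lemma rho_mono:
  fixes u v :: "'a::euclidean_space \<Rightarrow> real"
  assumes "\<And>x. \<bar>u x\<bar> \<le> \<bar>v x\<bar>" "\<And>x y. \<bar>u x - u y\<bar> \<le> \<bar>v x - v y\<bar>"
  shows "rho (prim g) s u \<le> rho (prim g) s v"
proof -
  have "Phi_G (prim g) u \<le> Phi_G (prim g) v"
    unfolding Phi_G_def by (intro nn_integral_mono ennreal_leI prim_mono) (auto simp: assms)
  moreover have "frac_quot s u z \<le> frac_quot s v z" for z
    unfolding frac_quot_def by (intro divide_right_mono) (auto simp: assms)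
  then have "Phi_sG (prim g) s u \<le> Phi_sG (prim g) s v"
    unfolding Phi_sG_frac_quot
    by (intro nn_integral_mono ennreal_leI divide_right_mono prim_mono) (auto simp: frac_quot_nonneg)
  ultimately show ?thesis unfolding rho_def by (rule add_mono)
qed

lemma rho_le_cmult_add:
  fixes u v w :: "'a::euclidean_space \<Rightarrow> real"
  assumes [measurable]: "v \<in> borel_measurable lborel" "w \<in> borel_measurable lborel"
    and K: "0 \<le> K"
    and le: "\<And>x. prim g \<bar>u x\<bar> \<le> K * (prim g \<bar>v x\<bar> + prim g \<bar>w x\<bar>)"
      "\<And>z. prim g (frac_quot s u z) \<le> K * (prim g (frac_quot s v z) + prim g (frac_quot s w z))"
  shows "rho (prim g) s u \<le> ennreal K * (rho (prim g) s v + rho (prim g) s w)"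
proof -
  have "Phi_G (prim g) u \<le> ennreal K * (Phi_G (prim g) v + Phi_G (prim g) w)"
    unfolding Phi_G_def
    by (rule nn_integral_le_cmult_add[OF Phi_G_integrand_measurable Phi_G_integrand_measurable])
      (auto intro!: prim_nonneg le K)
  moreover have "Phi_sG (prim g) s u \<le> ennreal K * (Phi_sG (prim g) s v + Phi_sG (prim g) s w)"
    unfolding Phi_sG_frac_quot
  proof (rule nn_integral_le_cmult_add[OF Phi_sG_integrand_measurable Phi_sG_integrand_measurable])
    fix z :: "'a \<times> 'a"
    show "prim g (frac_quot s u z) / dist (fst z) (snd z) powr real DIM('a) \<le>
      K * (prim g (frac_quot s v z) / dist (fst z) (snd z) powr real DIM('a) +
           prim g (frac_quot s w z) / dist (fst z) (snd z) powr real DIM('a))"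
      using le(2)[of z] by (simp add: add_divide_distrib[symmetric] divide_right_mono)
  qed (auto intro!: prim_nonneg divide_nonneg_nonneg frac_quot_nonneg K)
  ultimately have "rho (prim g) s u \<le> ennreal K * (Phi_G (prim g) v + Phi_G (prim g) w) +
      ennreal K * (Phi_sG (prim g) s v + Phi_sG (prim g) s w)"
    unfolding rho_def by (rule add_mono)
  also have "\<dots> = ennreal K * (rho (prim g) s v + rho (prim g) s w)"
    unfolding rho_def by (simp add: distrib_left ac_simps)
  finally show ?thesis .
qed

lemma rho_mult_le:
  fixes u :: "'a::euclidean_space \<Rightarrow> real"
  assumes [measurable]: "u \<in> borel_measurable lborel" and c: "0 \<le> c" "c \<le> 1"
  shows "rho (prim g) s (\<lambda>x. c * u x) \<le> ennreal c * rho (prim g) s u"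
proof -
  have quot: "frac_quot s (\<lambda>x. c * u x) z = c * frac_quot s u z" for z
    unfolding frac_quot_def using c by (simp add: abs_mult right_diff_distrib[symmetric])
  have "rho (prim g) s (\<lambda>x. c * u x) \<le> ennreal c * (rho (prim g) s u + rho (prim g) s (\<lambda>x::'a. 0))"
    by (intro rho_le_cmult_add) (use c in \<open>auto simp: quot abs_mult frac_quot_nonneg intro!: prim_mult_le\<close>)
  then show ?thesis by (simp add: rho_zero)
qed

lemma rho_divide_le_one_ex:
  fixes u :: "'a::euclidean_space \<Rightarrow> real"
  assumes [measurable]: "u \<in> borel_measurable lborel" and fin: "rho (prim g) s u < \<infinity>"
  shows "\<exists>l>0. rho (prim g) s (\<lambda>x. u x / l) \<le> 1"
proof -
  define r where "r = enn2real (rho (prim g) s u)"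
  have r: "0 \<le> r" "rho (prim g) s u = ennreal r"
    using fin by (auto simp: r_def less_top)
  have "rho (prim g) s (\<lambda>x. u x / (1 + r)) \<le> ennreal (1 / (1 + r)) * rho (prim g) s u"
    using rho_mult_le[of u "1 / (1 + r)" s] r by simp
  also have "\<dots> = ennreal (r / (1 + r))"
    using r by (simp add: ennreal_mult[symmetric])
  also have "\<dots> \<le> 1"
    using r(1) by simp
  finally show ?thesis using r(1) by (intro exI[of _ "1 + r"]) auto
qed

lemma sG_norm_le:
  assumes "0 < l" "rho (prim g) s (\<lambda>x. u x / l) \<le> 1"
  shows "sG_norm (prim g) s u \<le> l" "0 \<le> sG_norm (prim g) s u"
proof -
  have bdd: "bdd_below {l. l > 0 \<and> rho (prim g) s (\<lambda>x. u x / l) \<le> 1}"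
    by (rule bdd_belowI[of _ 0]) auto
  show "sG_norm (prim g) s u \<le> l"
    unfolding sG_norm_def by (rule cInf_lower[OF _ bdd]) (use assms in auto)
  show "0 \<le> sG_norm (prim g) s u"
    unfolding sG_norm_def by (rule cInf_greatest) (use assms in auto)
qed

lemma rho_le_one_if_sG_norm_less_one:
  fixes u :: "'a::euclidean_space \<Rightarrow> real"
  assumes [measurable]: "u \<in> borel_measurable lborel" and fin: "rho (prim g) s u < \<infinity>"
    and "sG_norm (prim g) s u < 1"
  shows "rho (prim g) s u \<le> 1"
proof -
  obtain l where l: "0 < l" "l < 1" "rho (prim g) s (\<lambda>x. u x / l) \<le> 1"
    using cInf_lessD[of "{l. l > 0 \<and> rho (prim g) s (\<lambda>x. u x / l) \<le> 1}" 1]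
      rho_divide_le_one_ex[OF assms(1,2)] assms(3)
    unfolding sG_norm_def by auto
  have "\<bar>a\<bar> \<le> \<bar>a / l\<bar>" for a
    using l by (simp add: abs_divide le_divide_eq mult_left_le)
  then have "rho (prim g) s u \<le> rho (prim g) s (\<lambda>x. u x / l)"
    by (intro rho_mono) (auto simp: diff_divide_distrib[symmetric])
  then show ?thesis using l by simp
qed

lemma sG_norm_tendsto_zero:
  assumes "\<And>l. 0 < l \<Longrightarrow> ((\<lambda>n. rho (prim g) s (\<lambda>x. u n x / l)) \<longlongrightarrow> 0) F"
  shows "((\<lambda>n. sG_norm (prim g) s (u n)) \<longlongrightarrow> 0) F"
proof (rule tendstoI)
  fix r :: real assume r: "0 < r"
  have "eventually (\<lambda>n. rho (prim g) s (\<lambda>x. u n x / (r / 2)) < 1) F"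
    using order_tendstoD(2)[OF assms[of "r / 2"]] r by simp
  then show "eventually (\<lambda>n. dist (sG_norm (prim g) s (u n)) 0 < r) F"
  proof eventually_elim
    case (elim n)
    then have "rho (prim g) s (\<lambda>x. u n x / (r / 2)) \<le> 1" by simp
    from sG_norm_le[OF _ this] r show ?case by auto
  qed
qed

lemma Phi_G_dominated_tendsto_zero:
  fixes e :: "'a::euclidean_space \<Rightarrow> real" and d :: "nat \<Rightarrow> 'a \<Rightarrow> real"
  assumes [measurable]: "e \<in> borel_measurable lborel" "\<And>n. d n \<in> borel_measurable lborel"
    and fin: "Phi_G (prim g) e < \<infinity>"
    and le: "\<And>n x. \<bar>d n x\<bar> \<le> \<bar>e x\<bar>" and lim: "\<And>x. (\<lambda>n. d n x) \<longlonglongrightarrow> 0"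
  shows "(\<lambda>n. Phi_G (prim g) (d n)) \<longlonglongrightarrow> 0"
  unfolding Phi_G_def
proof (rule nn_integral_dominated_tendsto_zero[OF Phi_G_integrand_measurable Phi_G_integrand_measurable])
  show "ennreal (prim g \<bar>d n x\<bar>) \<le> ennreal (prim g \<bar>e x\<bar>)" for n x
    using le by (intro ennreal_leI prim_mono) auto
  show "(\<lambda>n. ennreal (prim g \<bar>d n x\<bar>)) \<longlonglongrightarrow> 0" for x
    using prim_tendsto_zero[OF tendsto_rabs_zero[OF lim[of x]]] tendsto_ennrealI by fastforce
qed (use fin in \<open>auto simp: Phi_G_def\<close>)

lemma Phi_sG_dominated_tendsto_zero:
  fixes e :: "'a::euclidean_space \<Rightarrow> real" and d :: "nat \<Rightarrow> 'a \<Rightarrow> real"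
  assumes [measurable]: "e \<in> borel_measurable lborel" "\<And>n. d n \<in> borel_measurable lborel"
    and fin: "Phi_sG (prim g) s e < \<infinity>"
    and le: "\<And>n x y. \<bar>d n x - d n y\<bar> \<le> \<bar>e x - e y\<bar>" and lim: "\<And>x. (\<lambda>n. d n x) \<longlonglongrightarrow> 0"
  shows "(\<lambda>n. Phi_sG (prim g) s (d n)) \<longlonglongrightarrow> 0"
  unfolding Phi_sG_frac_quot
proof (rule nn_integral_dominated_tendsto_zero[OF Phi_sG_integrand_measurable Phi_sG_integrand_measurable])
  let ?D = "\<lambda>z::'a \<times> 'a. dist (fst z) (snd z) powr real DIM('a)"
  show "ennreal (prim g (frac_quot s (d n) z) / ?D z) \<le> ennreal (prim g (frac_quot s e z) / ?D z)" for n z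
    using le frac_quot_nonneg[of s "d n" z]
    by (intro ennreal_leI divide_right_mono prim_mono) (auto simp: frac_quot_def divide_right_mono)
  show "(\<lambda>n. ennreal (prim g (frac_quot s (d n) z) / ?D z)) \<longlonglongrightarrow> 0" for z
  proof -
    have "(\<lambda>n. frac_quot s (d n) z) \<longlonglongrightarrow> 0"
      unfolding frac_quot_def
      using tendsto_divide_zero[OF tendsto_rabs_zero[OF tendsto_diff[OF lim lim, simplified]]] by simp
    from prim_tendsto_zero[OF this] have "(\<lambda>n. prim g (frac_quot s (d n) z) / ?D z) \<longlonglongrightarrow> 0"
      by (auto intro: tendsto_divide_zero simp: frac_quot_nonneg)
    then show ?thesis using tendsto_ennrealI by fastforce
  qed
qed (use fin in \<open>auto simp: Phi_sG_frac_quot\<close>)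

lemma rho_dominated_tendsto_zero:
  fixes e :: "'a::euclidean_space \<Rightarrow> real" and d :: "nat \<Rightarrow> 'a \<Rightarrow> real"
  assumes [measurable]: "e \<in> borel_measurable lborel" "\<And>n. d n \<in> borel_measurable lborel"
    and fin: "rho (prim g) s e < \<infinity>"
    and le: "\<And>n x. \<bar>d n x\<bar> \<le> \<bar>e x\<bar>" "\<And>n x y. \<bar>d n x - d n y\<bar> \<le> \<bar>e x - e y\<bar>"
    and lim: "\<And>x. (\<lambda>n. d n x) \<longlonglongrightarrow> 0"
  shows "(\<lambda>n. rho (prim g) s (d n)) \<longlonglongrightarrow> 0"
proof -
  have "Phi_G (prim g) e < \<infinity>" "Phi_sG (prim g) s e < \<infinity>"
    using fin unfolding rho_def by (auto simp: top_unique)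
  from tendsto_add[OF Phi_G_dominated_tendsto_zero[OF _ _ this(1) le(1) lim]
      Phi_sG_dominated_tendsto_zero[OF _ _ this(2) le(2) lim]]
  show ?thesis unfolding rho_def by simp
qed

end

context young_fun_Delta2
begin

lemma rho_quasi_triangle:
  fixes u v w :: "'a::euclidean_space \<Rightarrow> real"
  assumes [measurable]: "v \<in> borel_measurable lborel" "w \<in> borel_measurable lborel"
    and "\<And>x. \<bar>u x\<bar> \<le> \<bar>v x\<bar> + \<bar>w x\<bar>"
    and "\<And>x y. \<bar>u x - u y\<bar> \<le> \<bar>v x - v y\<bar> + \<bar>w x - w y\<bar>"
  shows "rho (prim g) s u \<le> ennreal Delta2_const * (rho (prim g) s v + rho (prim g) s w)"
proof (rule rho_le_cmult_add)
  fix z :: "'a \<times> 'a"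
  have "frac_quot s u z \<le> frac_quot s v z + frac_quot s w z"
    unfolding frac_quot_def add_divide_distrib[symmetric]
    by (intro divide_right_mono) (auto simp: assms)
  then show "prim g (frac_quot s u z) \<le> Delta2_const * (prim g (frac_quot s v z) + prim g (frac_quot s w z))"
    by (intro prim_le_add) (auto simp: frac_quot_nonneg)
qed (use assms Delta2_const(1) in \<open>auto intro!: prim_le_add\<close>)

lemma rho_le_if_sG_norm_diff_less_one:
  fixes u v :: "'a::euclidean_space \<Rightarrow> real"
  assumes [measurable]: "u \<in> borel_measurable lborel" "v \<in> borel_measurable lborel"
    and fin: "rho (prim g) s u < \<infinity>" "rho (prim g) s v < \<infinity>"
    and near: "sG_norm (prim g) s (\<lambda>x. u x - v x) < 1"
  shows "rho (prim g) s u \<le> ennreal Delta2_const * (1 + rho (prim g) s v)"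
proof -
  have "rho (prim g) s (\<lambda>x. u x - v x) \<le> ennreal Delta2_const * (rho (prim g) s u + rho (prim g) s v)"
    by (intro rho_quasi_triangle) (auto simp: abs_diff_le_iff)
  also have "\<dots> < \<infinity>"
    using fin by (simp add: ennreal_mult_less_top ennreal_add_less_top)
  finally have "rho (prim g) s (\<lambda>x. u x - v x) \<le> 1"
    using near by (intro rho_le_one_if_sG_norm_less_one) auto
  have "rho (prim g) s u \<le> ennreal Delta2_const * (rho (prim g) s (\<lambda>x. u x - v x) + rho (prim g) s v)"
    by (intro rho_quasi_triangle) (auto simp: abs_diff_le_iff)
  also have "\<dots> \<le> ennreal Delta2_const * (1 + rho (prim g) s v)"
    using \<open>rho (prim g) s (\<lambda>x. u x - v x) \<le> 1\<close> by (intro mult_left_mono add_right_mono) auto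
  finally show ?thesis .
qed

lemma rho_divide_less_top:
  fixes u :: "'a::euclidean_space \<Rightarrow> real"
  assumes [measurable]: "u \<in> borel_measurable lborel" and fin: "rho (prim g) s u < \<infinity>" and l: "0 < l"
  shows "rho (prim g) s (\<lambda>x. u x / l) < \<infinity>"
proof -
  obtain K where K: "0 < K" "\<And>x. 0 \<le> x \<Longrightarrow> prim g (max 1 (1 / l) * x) \<le> K * prim g x"
    using prim_doubling[of "max 1 (1 / l)"] by auto
  have div: "prim g (x / l) \<le> K * prim g x" if "0 \<le> x" for x
  proof -
    have "(1 / l) * x \<le> max 1 (1 / l) * x"
      by (rule mult_right_mono[OF max.cobounded2 that])
    then have "x / l \<le> max 1 (1 / l) * x" by simp
    then have "prim g (x / l) \<le> prim g (max 1 (1 / l) * x)"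
      using that l by (intro prim_mono) auto
    then show ?thesis using K(2)[OF that] by linarith
  qed
  have quot: "frac_quot s (\<lambda>x. u x / l) z = frac_quot s u z / l" for z
    unfolding frac_quot_def using l by (simp add: diff_divide_distrib[symmetric] abs_divide)
  have "rho (prim g) s (\<lambda>x. u x / l) \<le> ennreal K * (rho (prim g) s u + rho (prim g) s (\<lambda>x::'a. 0))"
    by (intro rho_le_cmult_add) (use K(1) l in \<open>auto simp: quot abs_divide frac_quot_nonneg intro!: div\<close>)
  also have "\<dots> < \<infinity>"
    using fin by (simp add: rho_zero ennreal_mult_less_top)
  finally show ?thesis .
qed

end

section \<open>Admissible paths\<close>

lemma (in young_fun_Delta2) Gamma_paths_rho_bounded:
  fixes \<gamma> :: "real \<Rightarrow> 'a::euclidean_space \<Rightarrow> real"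
  assumes "\<gamma> \<in> Gamma_paths g s e"
  shows "\<exists>B<\<infinity>. \<forall>t\<in>{0..1}. rho (prim g) s (\<gamma> t) \<le> B"
proof -
  have W: "\<gamma> t \<in> borel_measurable lborel" "rho (prim g) s (\<gamma> t) < \<infinity>" if "t \<in> {0..1}" for t
    using assms that by (auto simp: Gamma_paths_def Wspace_def)
  have cont: "((\<lambda>t. sG_norm (prim g) s (\<lambda>x. \<gamma> t x - \<gamma> t0 x)) \<longlongrightarrow> 0) (at t0 within {0..1})"
    if "t0 \<in> {0..1}" for t0
    using assms that by (auto simp: Gamma_paths_def)
  show ?thesis
  proof (rule compact_locally_bounded_ennreal)
    fix t0 :: real assume t0: "t0 \<in> {0..1}"
    show "rho (prim g) s (\<gamma> t0) < \<infinity>" using W(2)[OF t0] .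
    have "eventually (\<lambda>t. t \<in> {0..1} \<and> sG_norm (prim g) s (\<lambda>x. \<gamma> t x - \<gamma> t0 x) < 1)
        (at t0 within {0..1})"
      using order_tendstoD(2)[OF cont[OF t0], of 1] by (simp add: eventually_at_filter)
    then have "eventually (\<lambda>t. rho (prim g) s (\<gamma> t) \<le> ennreal Delta2_const * (1 + rho (prim g) s (\<gamma> t0)))
        (at t0 within {0..1})"
      by eventually_elim (use W t0 in \<open>auto intro!: rho_le_if_sG_norm_diff_less_one\<close>)
    moreover have "ennreal Delta2_const * (1 + rho (prim g) s (\<gamma> t0)) < \<infinity>"
      using W(2)[OF t0] by (simp add: ennreal_mult_less_top ennreal_add_less_top)
    ultimately show "\<exists>b<\<infinity>. eventually (\<lambda>t. rho (prim g) s (\<gamma> t) \<le> b) (at t0 within {0..1})"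
      by blast
  qed simp
qed

text \<open>The level \<open>t / (1 - t)\<close> runs through \<open>[0, \<infinity>)\<close> as \<open>t\<close> runs through \<open>[0, 1)\<close>.\<close>

definition trunc_path :: "('a \<Rightarrow> real) \<Rightarrow> real \<Rightarrow> 'a \<Rightarrow> real" where
  "trunc_path e t = (if t < 1 then (\<lambda>x. min (e x) (t / (1 - t))) else e)"

lemma trunc_path_0: "(\<And>x. 0 \<le> e x) \<Longrightarrow> trunc_path e 0 = (\<lambda>x. 0)"
  by (auto simp: trunc_path_def min_def fun_eq_iff intro: antisym)

lemma trunc_path_1: "trunc_path e 1 = e"
  by (simp add: trunc_path_def)

lemma trunc_path_measurable [measurable]: "e \<in> borel_measurable M \<Longrightarrow> trunc_path e t \<in> borel_measurable M"
  unfolding trunc_path_def by (cases "t < 1") auto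

lemma trunc_path_diff_bounds:
  assumes e: "\<And>x. 0 \<le> e x" and t: "0 \<le> t" "0 \<le> t0"
  shows "\<bar>trunc_path e t x - trunc_path e t0 x\<bar> \<le> \<bar>e x\<bar>"
    "\<bar>(trunc_path e t x - trunc_path e t0 x) - (trunc_path e t y - trunc_path e t0 y)\<bar> \<le> \<bar>e x - e y\<bar>"
proof -
  have k: "0 \<le> t / (1 - t)" if "t < 1" "0 \<le> t" for t :: real using that by simp
  have m1: "\<bar>min z a - min z b\<bar> \<le> \<bar>z\<bar>" if "0 \<le> z" "0 \<le> a" "0 \<le> b" for z a b :: real
    using that by (auto simp: min_def)
  have m2: "\<bar>min z a - z\<bar> \<le> \<bar>z\<bar>" "\<bar>z - min z a\<bar> \<le> \<bar>z\<bar>" if "0 \<le> z" "0 \<le> a" for z a :: real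
    using that by (auto simp: min_def)
  have l1: "\<bar>(min z a - min z b) - (min w a - min w b)\<bar> \<le> \<bar>z - w\<bar>" for z w a b :: real
    by (auto simp: min_def)
  have l2: "\<bar>(min z a - z) - (min w a - w)\<bar> \<le> \<bar>z - w\<bar>" for z w a :: real
    by (auto simp: min_def)
  show "\<bar>trunc_path e t x - trunc_path e t0 x\<bar> \<le> \<bar>e x\<bar>"
    using m1 m2 k t e[of x] by (auto simp: trunc_path_def)
  show "\<bar>(trunc_path e t x - trunc_path e t0 x) - (trunc_path e t y - trunc_path e t0 y)\<bar> \<le> \<bar>e x - e y\<bar>"
    using l1 l2[of "e x" _ "e y"] l2[of "e y" _ "e x"]
    by (auto simp: trunc_path_def abs_minus_commute)
qed

lemma trunc_path_tendsto:
  assumes t0: "t0 \<in> {0..1}"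
  shows "((\<lambda>t. trunc_path e t x) \<longlongrightarrow> trunc_path e t0 x) (at t0 within {0..1})"
proof (cases "t0 < 1")
  case True
  have "((\<lambda>t. min (e x) (t / (1 - t))) \<longlongrightarrow> min (e x) (t0 / (1 - t0))) (at t0 within {0..1})"
    using True by (intro tendsto_intros) auto
  moreover have "eventually (\<lambda>t. t < 1) (at t0 within {0..1})"
    using True by (intro order_tendstoD(2)[OF tendsto_ident_at])
  then have "eventually (\<lambda>t. min (e x) (t / (1 - t)) = trunc_path e t x) (at t0 within {0..1})"
    by eventually_elim (simp add: trunc_path_def)
  ultimately show ?thesis
    using True by (auto simp: trunc_path_def intro: Lim_transform_eventually)
next
  case False
  then have t01: "t0 = 1" using t0 by auto
  text \<open>Once \<open>t / (1 - t)\<close> exceeds \<open>e x\<close>, the truncation at \<open>x\<close> is the identity.\<close>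
  define c where "c = max 0 (e x)"
  have c: "0 \<le> c" "e x \<le> c" "c / (1 + c) < 1" by (auto simp: c_def)
  have "eventually (\<lambda>t. c / (1 + c) < t) (at t0 within {0..1})"
    using order_tendstoD(1)[OF tendsto_ident_at[where s="{0..1}"], of "c / (1 + c)"] c(3) t01 by simp
  moreover have "eventually (\<lambda>t. t \<in> {0..1}) (at t0 within {0..1})"
    by (simp add: eventually_at_filter)
  ultimately have "eventually (\<lambda>t. c / (1 + c) < t \<and> t \<in> {0..1}) (at t0 within {0..1})"
    by (rule eventually_conj)
  then have "eventually (\<lambda>t. trunc_path e t x = e x) (at t0 within {0..1})"
  proof eventually_elim
    case (elim t)
    show ?case
    proof (cases "t < 1")
      case True
      then have "c < t * (1 + c)" "0 < 1 - t" using elim c by (auto simp: divide_less_eq)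
      then have "c < t / (1 - t)" by (simp add: less_divide_eq algebra_simps)
      then show ?thesis using True c by (simp add: trunc_path_def)
    qed (simp add: trunc_path_def)
  qed
  then show ?thesis
    using t01 by (simp add: trunc_path_1 tendsto_eventually)
qed

lemma (in young_fun) rho_trunc_path_le:
  fixes e :: "'a::euclidean_space \<Rightarrow> real"
  assumes "\<And>x. 0 \<le> e x" "0 \<le> t"
  shows "rho (prim g) s (trunc_path e t) \<le> rho (prim g) s e"
  using trunc_path_diff_bounds[of e t 0] trunc_path_0[of e] assms
  by (intro rho_mono) auto

context young_fun_Delta2
begin

lemma rho_trunc_path_diff_tendsto_zero:
  fixes e :: "'a::euclidean_space \<Rightarrow> real"
  assumes [measurable]: "e \<in> borel_measurable lborel" and fin: "rho (prim g) s e < \<infinity>"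
    and e: "\<And>x. 0 \<le> e x" and t0: "t0 \<in> {0..1}" and l: "0 < l"
  shows "((\<lambda>t. rho (prim g) s (\<lambda>x. (trunc_path e t x - trunc_path e t0 x) / l)) \<longlongrightarrow> 0)
    (at t0 within {0..1})"
  unfolding tendsto_at_iff_sequentially comp_def
proof (intro allI impI)
  fix X :: "nat \<Rightarrow> real" assume X: "\<forall>i. X i \<in> {0..1} - {t0}" "X \<longlonglongrightarrow> t0"
  show "(\<lambda>n. rho (prim g) s (\<lambda>x. (trunc_path e (X n) x - trunc_path e t0 x) / l)) \<longlonglongrightarrow> 0"
  proof (rule rho_dominated_tendsto_zero[of "\<lambda>x. e x / l"])
    show "rho (prim g) s (\<lambda>x. e x / l) < \<infinity>"
      by (rule rho_divide_less_top[OF _ fin l]) simp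
    show "\<bar>(trunc_path e (X n) x - trunc_path e t0 x) / l\<bar> \<le> \<bar>e x / l\<bar>" for n x
      using trunc_path_diff_bounds(1)[of e "X n" t0 x] e X t0 l
      by (auto simp: abs_divide divide_right_mono)
    show "\<bar>(trunc_path e (X n) x - trunc_path e t0 x) / l - (trunc_path e (X n) y - trunc_path e t0 y) / l\<bar>
        \<le> \<bar>e x / l - e y / l\<bar>" for n x y
      using trunc_path_diff_bounds(2)[of e "X n" t0 x y] e X t0 l
      by (auto simp: abs_divide divide_right_mono diff_divide_distrib[symmetric])
    show "(\<lambda>n. (trunc_path e (X n) x - trunc_path e t0 x) / l) \<longlonglongrightarrow> 0" for x
    proof -
      have "(\<lambda>n. trunc_path e (X n) x) \<longlonglongrightarrow> trunc_path e t0 x"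
        using trunc_path_tendsto[OF t0, of e x] X
        unfolding tendsto_at_iff_sequentially comp_def by blast
      from tendsto_divide_zero[OF LIM_zero[OF this], of l] show ?thesis .
    qed
  qed simp_all
qed

lemma trunc_path_in_Gamma_paths:
  fixes e :: "'a::euclidean_space \<Rightarrow> real"
  assumes [measurable]: "e \<in> borel_measurable lborel" and fin: "rho (prim g) s e < \<infinity>"
    and e: "\<And>x. 0 \<le> e x"
  shows "trunc_path e \<in> Gamma_paths g s e"
proof -
  have "trunc_path e t \<in> Wspace (prim g) s" if "t \<in> {0..1}" for t
    using rho_trunc_path_le[of e t s] e fin that by (auto simp: Wspace_def)
  moreover have "((\<lambda>t. sG_norm (prim g) s (\<lambda>x. trunc_path e t x - trunc_path e t0 x)) \<longlongrightarrow> 0)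
      (at t0 within {0..1})" if "t0 \<in> {0..1}" for t0
    by (rule sG_norm_tendsto_zero) (rule rho_trunc_path_diff_tendsto_zero[OF assms that])
  ultimately show ?thesis
    unfolding Gamma_paths_def using trunc_path_0[OF e] trunc_path_1 by auto
qed

end

section \<open>The critical Young function \<open>G\<^sub>N\<^sub>/\<^sub>s\<close>\<close>

text \<open>(G2) and (G3) make \<open>H\<close> a bijection of \<open>[0, \<infinity>)\<close>, so that \<open>G\<^sub>N\<^sub>/\<^sub>s = G \<circ> H\<^sup>-\<^sup>1\<close> is a genuine
  nonnegative function with \<open>G\<^sub>N\<^sub>/\<^sub>s(0) = 0\<close>; without surjectivity \<open>the_inv_into\<close> would
  produce junk values.\<close>

locale young_fun_critical = young_fun +
  fixes s N :: real
  assumes s_pos: "0 < s" and s_less: "s < N"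
    and G2: "(\<integral>\<^sup>+ t\<in>{1..}. ennreal ((t / prim g t) powr (s / (N - s))) \<partial>lborel) = \<infinity>"
    and G3: "(\<integral>\<^sup>+ t\<in>{0..1}. ennreal ((t / prim g t) powr (s / (N - s))) \<partial>lborel) < \<infinity>"
begin

definition weight :: "real \<Rightarrow> real" where
  "weight t = (t / prim g (max 0 t)) powr (s / (N - s))"

lemma exponent_pos: "0 < s / (N - s)"
  using s_pos s_less by simp

lemma weight_eq: "0 \<le> t \<Longrightarrow> weight t = (t / prim g t) powr (s / (N - s))"
  by (simp add: weight_def)

lemma weight_nonneg: "0 \<le> weight t"
  by (simp add: weight_def)

lemma weight_measurable [measurable]: "weight \<in> borel_measurable borel"
proof -
  have [measurable]: "(\<lambda>t. prim g (max 0 t)) \<in> borel_measurable borel"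
    by (rule borel_measurable_prim_comp) auto
  show ?thesis unfolding weight_def by measurable
qed

lemma weight_le:
  assumes "0 < a" "a \<le> t" "t \<le> b"
  shows "(a / prim g b) powr (s / (N - s)) \<le> weight t" "weight t \<le> (b / prim g a) powr (s / (N - s))"
proof -
  have "prim g a \<le> prim g t" "prim g t \<le> prim g b" "0 < prim g a"
    using assms by (auto intro: prim_mono prim_pos)
  then have "a / prim g b \<le> t / prim g t" "t / prim g t \<le> b / prim g a"
    using assms by (auto intro!: frac_le)
  then show "(a / prim g b) powr (s / (N - s)) \<le> weight t" "weight t \<le> (b / prim g a) powr (s / (N - s))"
    using assms exponent_pos prim_pos[of b] prim_pos[of t] by (auto simp: weight_eq intro!: powr_mono2)
qed

lemma nn_integral_weight_eq:
  "(\<integral>\<^sup>+ t. ennreal (weight t) * indicator {a..} t \<partial>lborel) =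
    (\<integral>\<^sup>+ t\<in>{a..}. ennreal ((t / prim g t) powr (s / (N - s))) \<partial>lborel)"
  "(\<integral>\<^sup>+ t. ennreal (weight t) * indicator {a..b} t \<partial>lborel) =
    (\<integral>\<^sup>+ t\<in>{a..b}. ennreal ((t / prim g t) powr (s / (N - s))) \<partial>lborel)" if "0 \<le> a"
  using that by (auto intro!: nn_integral_cong simp: weight_eq split: split_indicator)

lemma set_integrable_weight: "set_integrable lborel {0..b} weight"
proof -
  have "set_integrable lborel {0..1} weight"
    unfolding set_integrable_def
  proof (rule integrableI_nonneg)
    have "(\<integral>\<^sup>+ x. ennreal (indicator {0..1} x *\<^sub>R weight x) \<partial>lborel) =
        (\<integral>\<^sup>+ t. ennreal (weight t) * indicator {0..1} t \<partial>lborel)"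
      by (rule nn_integral_cong) (auto split: split_indicator)
    then show "(\<integral>\<^sup>+ x. ennreal (indicator {0..1} x *\<^sub>R weight x) \<partial>lborel) < \<infinity>"
      using G3 nn_integral_weight_eq(2)[of 0 1] by simp
  qed (auto simp: weight_nonneg)
  moreover have "set_integrable lborel {1..max 1 b} weight"
  proof (rule set_integrable_bound[where f="\<lambda>_. (max 1 b / prim g 1) powr (s / (N - s))"])
    show "AE x in lborel. x \<in> {1..max 1 b} \<longrightarrow> norm (weight x) \<le> norm ((max 1 b / prim g 1) powr (s / (N - s)))"
      using weight_le(2)[of 1] weight_nonneg by (auto intro!: AE_I2)
  qed (auto simp: set_borel_measurable_def intro!: borel_integrable_atLeastAtMost')
  ultimately have "set_integrable lborel ({0..1} \<union> {1..max 1 b}) weight"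
    by (rule set_integrable_Un) auto
  then show ?thesis by (rule set_integrable_subset) auto
qed

lemma weight_integrable_on: "weight integrable_on {0..b}"
  using set_borel_integral_eq_integral(1)[OF set_integrable_weight] .

definition H_base :: "real \<Rightarrow> real" where
  "H_base t = integral {0..t} weight"

lemma H_base_diff: "0 \<le> x \<Longrightarrow> x \<le> y \<Longrightarrow> H_base y - H_base x = integral {x..y} weight"
  using Henstock_Kurzweil_Integration.integral_combine[where a=0 and c=x and b=y and f=weight]
    weight_integrable_on[of y]
  by (auto simp: H_base_def)

lemma H_base_zero [simp]: "H_base 0 = 0"
  by (simp add: H_base_def)

lemma H_base_strict_mono:
  assumes "0 \<le> x" "x < y"
  shows "H_base x < H_base y"
proof -
  define m where "m = (x + y) / 2"
  have m: "x < m" "m < y" using assms by (auto simp: m_def)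
  have int: "weight integrable_on {a..b}" if "x \<le> a" "b \<le> y" for a b
    by (rule integrable_on_subinterval[OF weight_integrable_on[of y]]) (use that assms in auto)
  have "integral {m..y} (\<lambda>_. (m / prim g y) powr (s / (N - s))) \<le> integral {m..y} weight"
    using m assms weight_le(1)[of m _ y] by (intro integral_le int) auto
  moreover have "0 < integral {m..y} (\<lambda>_. (m / prim g y) powr (s / (N - s)))"
    using m assms prim_pos[of y] by simp
  moreover have "0 \<le> integral {x..m} weight"
    using m by (intro integral_nonneg int) (auto simp: weight_nonneg)
  moreover have "integral {x..y} weight = integral {x..m} weight + integral {m..y} weight"
    using Henstock_Kurzweil_Integration.integral_combine[where a=x and c=m and b=y and f=weight] int m
    by auto
  ultimately show ?thesis using H_base_diff[of x y] assms by simp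
qed

lemma H_base_nonneg: "0 \<le> t \<Longrightarrow> 0 \<le> H_base t"
  using H_base_strict_mono[of 0 t] by (cases "t = 0") auto

lemma H_base_continuous_on: "continuous_on {0..b} H_base"
  unfolding H_base_def by (rule indefinite_integral_continuous_1[OF weight_integrable_on])

lemma H_base_unbounded: "\<exists>T\<ge>0. B < H_base T"
proof (rule ccontr)
  assume "\<not> ?thesis"
  then have bnd: "H_base T \<le> B" if "0 \<le> T" for T using that by (auto simp: not_less)
  define f where "f = (\<lambda>(n::nat) t. ennreal (weight t) * indicator {1..1 + real n} t)"
  have "incseq f"
    unfolding f_def incseq_def le_fun_def by (auto intro!: mult_left_mono split: split_indicator)
  moreover have "\<And>i. f i \<in> borel_measurable lborel" unfolding f_def by measurable
  ultimately have "(\<integral>\<^sup>+ t. (SUP i. f i t) \<partial>lborel) = (SUP i. integral\<^sup>N lborel (f i))"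
    by (rule nn_integral_monotone_convergence_SUP)
  moreover have "(SUP i. f i t) = ennreal (weight t) * indicator {1..} t" for t
  proof (cases "1 \<le> t")
    case True
    obtain n :: nat where n: "t \<le> real n" using real_arch_simple by blast
    have "f n t = ennreal (weight t)" "\<And>i. f i t \<le> ennreal (weight t)"
      using True n by (auto simp: f_def split: split_indicator)
    then have "(SUP i. f i t) = ennreal (weight t)"
      by (intro antisym SUP_least) (auto intro: SUP_upper2[where i=n])
    then show ?thesis using True by simp
  qed (auto simp: f_def)
  moreover have "integral\<^sup>N lborel (f i) \<le> ennreal B" for i
  proof -
    have "(weight has_integral integral {1..1 + real i} weight) {1..1 + real i}"
      using integrable_on_subinterval[OF weight_integrable_on[of "1 + real i"], of 1 "1 + real i"] by auto
    from nn_integral_has_integral_lebesgue'[OF _ this]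
    have "integral\<^sup>N lborel (f i) = ennreal (integral {1..1 + real i} weight)"
      unfolding f_def using weight_nonneg by simp
    also have "integral {1..1 + real i} weight \<le> B"
      using H_base_diff[of 1 "1 + real i"] bnd[of "1 + real i"] H_base_nonneg[of 1] by simp
    finally show ?thesis by (simp add: ennreal_leI)
  qed
  ultimately have "(\<integral>\<^sup>+ t. ennreal (weight t) * indicator {1..} t \<partial>lborel) \<le> ennreal B"
    by (simp add: SUP_least)
  then show False using G2 nn_integral_weight_eq(1)[of 1] by (simp add: top_unique)
qed

lemma Hfun_eq: "0 \<le> t \<Longrightarrow> Hfun g s N t = H_base t powr ((N - s) / s)"
proof -
  assume t: "0 \<le> t"
  have si: "set_integrable lborel {0..t} (\<lambda>\<tau>. (\<tau> / prim g \<tau>) powr (s / (N - s)))"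
    using set_integrable_weight[of t] by (rule set_integrable_cong[THEN iffD1, rotated -1]) (auto simp: weight_eq)
  have "(LBINT \<tau>=0..t. (\<tau> / prim g \<tau>) powr (s / (N - s))) =
      integral {0..t} (\<lambda>\<tau>. (\<tau> / prim g \<tau>) powr (s / (N - s)))"
    using interval_integral_eq_integral[OF t si] by (simp add: zero_ereal_def)
  also have "\<dots> = H_base t"
    unfolding H_base_def by (rule integral_cong) (auto simp: weight_eq)
  finally show ?thesis by (simp add: Hfun_def)
qed

lemma Hfun_bij_betw: "bij_betw (Hfun g s N) {0..} {0..}"
proof (rule bij_betw_imageI)
  have mono: "Hfun g s N x < Hfun g s N y" if "0 \<le> x" "x < y" for x y
    using H_base_strict_mono[OF that] H_base_nonneg[of x] that s_pos s_less
    by (simp add: Hfun_eq powr_less_mono2)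
  show "inj_on (Hfun g s N) {0..}"
    by (rule inj_onI) (metis atLeast_iff linorder_neqE_linordered_idom mono order_less_irrefl)
  show "Hfun g s N ` {0..} = {0..}"
  proof (intro equalityI subsetI)
    fix u assume "u \<in> Hfun g s N ` {0..}"
    then show "u \<in> {0..}" by (auto simp: Hfun_eq)
  next
    fix u :: real assume u: "u \<in> {0..}"
    obtain T where T: "0 \<le> T" "u powr (s / (N - s)) < H_base T"
      using H_base_unbounded by blast
    then obtain x where x: "x \<in> {0..T}" "H_base x = u powr (s / (N - s))"
      using IVT'[of H_base 0 "u powr (s / (N - s))" T] H_base_continuous_on[of T] u by auto
    have "Hfun g s N x = (u powr (s / (N - s))) powr ((N - s) / s)"
      using x by (simp add: Hfun_eq)
    also have "\<dots> = u"
      using u s_pos s_less by (simp add: powr_powr)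
    finally show "u \<in> Hfun g s N ` {0..}" using x by force
  qed
qed

lemma GNs_nonneg: "0 \<le> t \<Longrightarrow> 0 \<le> GNs g s N t"
  using bij_betwE[OF bij_betw_the_inv_into[OF Hfun_bij_betw]]
  by (auto simp: GNs_def intro: prim_nonneg)

lemma GNs_zero: "GNs g s N 0 = 0"
proof -
  have "the_inv_into {0..} (Hfun g s N) 0 = 0"
    using bij_betw_imp_inj_on[OF Hfun_bij_betw] H_base_zero s_pos s_less
    by (intro the_inv_into_f_eq) (auto simp: Hfun_eq)
  then show ?thesis by (simp add: GNs_def)
qed

end

section \<open>The nonlinearity\<close>

locale AR_nonlinearity = young_fun +
  fixes f :: "real \<Rightarrow> real" and \<theta> :: real
  assumes f_cont: "continuous_on UNIV f"
    and f_small: "((\<lambda>t. f t / g \<bar>t\<bar>) \<longlongrightarrow> 0) (at 0)"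
    and \<theta>_pos: "0 < \<theta>"
    and AR: "\<forall>t. t \<noteq> 0 \<longrightarrow> 0 < \<theta> * prim f t \<and> \<theta> * prim f t \<le> f t * t"
begin

lemma prim_f_pos: "t \<noteq> 0 \<Longrightarrow> 0 < prim f t"
  using AR \<theta>_pos by (meson zero_less_mult_pos)

lemma prim_f_nonneg: "0 \<le> prim f t"
  using prim_f_pos[of t] by (cases "t = 0") (auto simp: prim_def zero_ereal_def)

lemma f_pos: "0 < t \<Longrightarrow> 0 < f t"
  using AR prim_f_pos[of t] \<theta>_pos by (smt (verit) zero_less_mult_iff)

lemma f_neg: "t < 0 \<Longrightarrow> f t < 0"
  using AR prim_f_pos[of t] \<theta>_pos by (smt (verit) zero_less_mult_iff)

lemma f_zero: "f 0 = 0"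
proof -
  have c: "isCont f 0" using f_cont by (simp add: continuous_on_eq_continuous_at)
  have "(\<lambda>n. f (1 / Suc n)) \<longlonglongrightarrow> f 0"
    using isCont_tendsto_compose[OF c LIMSEQ_inverse_real_of_nat] by (simp add: inverse_eq_divide)
  then have "0 \<le> f 0" by (rule LIMSEQ_le_const) (auto intro!: less_imp_le f_pos)
  have "(\<lambda>n. - inverse (real (Suc n))) \<longlonglongrightarrow> 0"
    using tendsto_minus[OF LIMSEQ_inverse_real_of_nat] by simp
  from isCont_tendsto_compose[OF c this] have "(\<lambda>n. f (- (1 / Suc n))) \<longlonglongrightarrow> f 0"
    by (simp add: inverse_eq_divide)
  then have "f 0 \<le> 0" by (rule LIMSEQ_le_const2) (auto intro!: less_imp_le f_neg)
  with \<open>0 \<le> f 0\<close> show ?thesis by simp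
qed

lemma f_nonneg: "0 \<le> t \<Longrightarrow> 0 \<le> f t"
  using f_pos[of t] f_zero by (cases "t = 0") auto

lemma set_integrable_f: "set_integrable lborel {a..b} f"
  by (rule borel_integrable_atLeastAtMost') (use f_cont continuous_on_subset in blast)

lemma f_integrable_on: "f integrable_on {a..b}"
  using set_borel_integral_eq_integral(1)[OF set_integrable_f] .

lemma prim_f_eq_integral: "0 \<le> t \<Longrightarrow> prim f t = integral {0..t} f"
  using interval_integral_eq_integral[of 0 t f] set_integrable_f[of 0 t]
  by (simp add: prim_def zero_ereal_def)

lemma prim_f_mono: "0 \<le> x \<Longrightarrow> x \<le> y \<Longrightarrow> prim f x \<le> prim f y"
proof -
  assume xy: "0 \<le> x" "x \<le> y"
  have "integral {0..x} f + integral {x..y} f = integral {0..y} f"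
    using Henstock_Kurzweil_Integration.integral_combine[where a=0 and c=x and b=y and f=f]
      f_integrable_on xy
    by auto
  moreover have "0 \<le> integral {x..y} f"
    by (rule integral_nonneg[OF f_integrable_on]) (use xy in \<open>auto intro: f_nonneg\<close>)
  ultimately show ?thesis using prim_f_eq_integral[of x] prim_f_eq_integral[of y] xy by simp
qed

lemma borel_measurable_prim_f_comp:
  "h \<in> borel_measurable M \<Longrightarrow> (\<And>x. 0 \<le> h x) \<Longrightarrow> (\<lambda>x. prim f (h x)) \<in> borel_measurable M"
  by (rule borel_measurable_mono_on_comp) (auto simp: mono_on_def intro: prim_f_mono)

text \<open>Near \<open>0\<close> this is (f1); away from \<open>0\<close> both sides are bounded and \<open>G\<close> is bounded below.\<close>

lemma prim_f_le_prim_g: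
  assumes K: "0 < K"
  shows "\<exists>C>0. \<forall>t. 0 \<le> t \<longrightarrow> t \<le> K \<longrightarrow> prim f t \<le> C * prim g t"
proof -
  have "eventually (\<lambda>t. \<bar>f t / g \<bar>t\<bar>\<bar> < 1) (at 0)"
    using order_tendstoD(2)[OF tendsto_rabs[OF f_small]] by simp
  then obtain d where d: "0 < d" "\<And>t. t \<noteq> 0 \<Longrightarrow> dist t 0 < d \<Longrightarrow> \<bar>f t / g \<bar>t\<bar>\<bar> < 1"
    unfolding eventually_at by auto
  define d' where "d' = min (d / 2) K"
  have d': "0 < d'" "d' < d" "d' \<le> K" using d K by (auto simp: d'_def)
  have "f t \<le> g t" if "0 \<le> t" "t \<le> d'" for t
  proof (cases "t = 0")
    case False
    then have "\<bar>f t / g t\<bar> < 1" "0 < g t" using d(2)[of t] d' that g_pos by auto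
    then show ?thesis by (simp add: abs_less_iff divide_less_eq)
  qed (simp add: f_zero)
  then have small: "prim f t \<le> prim g t" if "0 \<le> t" "t \<le> d'" for t
    using integral_le[OF f_integrable_on g_integrable_on, of 0 t] prim_f_eq_integral[of t]
      prim_eq_integral[of t] that
    by simp
  define C where "C = max 1 (prim f K / prim g d')"
  have Gd: "0 < prim g d'" using prim_pos d' by simp
  have "prim f t \<le> C * prim g t" if t: "0 \<le> t" "t \<le> K" for t
  proof (cases "t \<le> d'")
    case True
    then show ?thesis
      using small[OF t(1)] mult_right_mono[of 1 C "prim g t"] prim_nonneg[of t] t by (simp add: C_def)
  next
    case False
    have "prim f t \<le> prim f K" using t by (intro prim_f_mono) auto
    also have "\<dots> = (prim f K / prim g d') * prim g d'" using Gd by simp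
    also have "\<dots> \<le> C * prim g d'" using Gd by (intro mult_right_mono) (auto simp: C_def)
    also have "\<dots> \<le> C * prim g t" using False d' by (intro mult_left_mono prim_mono) (auto simp: C_def)
    finally show ?thesis .
  qed
  then show ?thesis by (intro exI[of _ C]) (auto simp: C_def)
qed

end

section \<open>The mountain pass level\<close>

lemma orlicz_norm_eq_zero_if_AE_zero:
  fixes u :: "'a::euclidean_space \<Rightarrow> real"
  assumes "A 0 = 0" "AE x in lborel. u x = 0"
  shows "orlicz_norm A u = 0"
proof -
  have "(\<integral>\<^sup>+ x. ennreal (A (\<bar>u x\<bar> / l)) \<partial>lborel) = 0" for l
    using assms by (subst nn_integral_cong_AE[where v="\<lambda>x. 0"]) (auto elim!: AE_mp)
  then have "{l. l > 0 \<and> (\<integral>\<^sup>+ x. ennreal (A (\<bar>u x\<bar> / l)) \<partial>lborel) \<le> 1} = {0<..}"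
    by auto
  then show ?thesis unfolding orlicz_norm_def by simp
qed

locale mp_setting = young_fun_Delta2 g p + AR_nonlinearity g f \<theta>
  for g p f \<theta> +
  fixes s :: real and e :: "'a::euclidean_space \<Rightarrow> real"
  assumes critical_nonneg: "\<And>t. 0 \<le> t \<Longrightarrow> 0 \<le> GNs g s (real DIM('a)) t"
    and critical_zero: "GNs g s (real DIM('a)) 0 = 0"
    and e_W: "e \<in> Wspace (prim g) s"
    and e_nonneg: "\<And>x. 0 \<le> e x"
    and e_nonzero: "\<not> (AE x in lborel. e x = 0)"
begin

lemma e_measurable [measurable]: "e \<in> borel_measurable lborel"
  using e_W by (simp add: Wspace_def)

lemma rho_e_less_top: "rho (prim g) s e < \<infinity>"
  using e_W by (simp add: Wspace_def)

lemma I_fun_zero: "I_fun g f s lam (\<lambda>x::'a. 0) = 0"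
  using critical_zero by (simp add: I_fun_def prim_def zero_ereal_def)

lemma I_fun_le:
  fixes u :: "'a \<Rightarrow> real"
  assumes fin: "rho (prim g) s u < \<infinity>"
  shows "I_fun g f s lam u \<le> enn2real (rho (prim g) s u) - lam * (\<integral>x. prim f (u x) \<partial>lborel)"
proof -
  have "(\<integral>z. prim g (\<bar>u (fst z) - u (snd z)\<bar> / dist (fst z) (snd z) powr s)
        / dist (fst z) (snd z) powr real DIM('a) \<partial>(lborel \<Otimes>\<^sub>M lborel)) \<le> enn2real (Phi_sG (prim g) s u)"
    unfolding Phi_sG_def by (rule integral_le_enn2real_nn_integral) (auto intro!: divide_nonneg_nonneg prim_nonneg)
  moreover have "(\<integral>x. prim g \<bar>u x\<bar> \<partial>lborel) \<le> enn2real (Phi_G (prim g) u)"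
    unfolding Phi_G_def by (rule integral_le_enn2real_nn_integral) (auto intro!: prim_nonneg)
  moreover have "0 \<le> (\<integral>x. GNs g s (real DIM('a)) \<bar>u x\<bar> \<partial>lborel)"
    by (rule Bochner_Integration.integral_nonneg) (auto intro!: critical_nonneg)
  moreover have "enn2real (rho (prim g) s u) = enn2real (Phi_G (prim g) u) + enn2real (Phi_sG (prim g) s u)"
    using fin unfolding rho_def by (intro enn2real_plus) (auto simp: top_unique)
  ultimately show ?thesis unfolding I_fun_def by linarith
qed

lemma integral_prim_f_nonneg: "0 \<le> (\<integral>x. prim f (u x) \<partial>M)"
  by (rule Bochner_Integration.integral_nonneg) (auto intro: prim_f_nonneg)

lemma I_fun_le_rho:
  fixes u :: "'a \<Rightarrow> real"
  assumes "rho (prim g) s u < \<infinity>" "0 \<le> lam"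
  shows "I_fun g f s lam u \<le> enn2real (rho (prim g) s u)"
  using I_fun_le[OF assms(1), of lam] integral_prim_f_nonneg[of lborel u] assms(2)
  by (smt (verit) mult_nonneg_nonneg)

lemma I_fun_Gamma_paths_bdd_above:
  assumes \<gamma>: "\<gamma> \<in> Gamma_paths g s e" and lam: "0 \<le> lam"
  shows "bdd_above ((\<lambda>t. I_fun g f s lam (\<gamma> t)) ` {0..1})"
proof -
  obtain B where B: "B < \<infinity>" "\<And>t. t \<in> {0..1} \<Longrightarrow> rho (prim g) s (\<gamma> t) \<le> B"
    using Gamma_paths_rho_bounded[OF \<gamma>] by blast
  have "I_fun g f s lam (\<gamma> t) \<le> enn2real B" if t: "t \<in> {0..1}" for t
  proof -
    have "I_fun g f s lam (\<gamma> t) \<le> enn2real (rho (prim g) s (\<gamma> t))"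
      using B t lam by (intro I_fun_le_rho) (auto intro: le_less_trans)
    also have "\<dots> \<le> enn2real B"
      using B t by (intro enn2real_mono) (auto simp: less_top)
    finally show ?thesis .
  qed
  then show ?thesis by (intro bdd_aboveI[of _ "enn2real B"]) auto
qed

lemma I_fun_Gamma_paths_Sup_nonneg:
  assumes \<gamma>: "\<gamma> \<in> Gamma_paths g s e" and lam: "0 \<le> lam"
  shows "0 \<le> (SUP t\<in>{0..1}. I_fun g f s lam (\<gamma> t))"
proof -
  have "I_fun g f s lam (\<gamma> 0) \<le> (SUP t\<in>{0..1}. I_fun g f s lam (\<gamma> t))"
    by (rule cSUP_upper[OF _ I_fun_Gamma_paths_bdd_above[OF assms]]) simp
  moreover have "\<gamma> 0 = (\<lambda>x. 0)" using \<gamma> by (simp add: Gamma_paths_def)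
  ultimately show ?thesis by (simp add: I_fun_zero)
qed

lemma mp_level_nonneg_and_le:
  assumes "0 \<le> lam"
  shows "0 \<le> mp_level g f s e lam"
    "mp_level g f s e lam \<le> (SUP t\<in>{0..1}. I_fun g f s lam (trunc_path e t))"
proof -
  have \<Gamma>: "trunc_path e \<in> Gamma_paths g s e"
    by (rule trunc_path_in_Gamma_paths[OF e_measurable rho_e_less_top e_nonneg])
  show "0 \<le> mp_level g f s e lam"
    unfolding mp_level_def using \<Gamma> I_fun_Gamma_paths_Sup_nonneg[OF _ assms]
    by (intro cINF_greatest) auto
  have "bdd_below ((\<lambda>\<gamma>. SUP t\<in>{0..1}. I_fun g f s lam (\<gamma> t)) ` Gamma_paths g s e)"
    using I_fun_Gamma_paths_Sup_nonneg[OF _ assms] by (intro bdd_belowI[of _ 0]) auto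
  then show "mp_level g f s e lam \<le> (SUP t\<in>{0..1}. I_fun g f s lam (trunc_path e t))"
    unfolding mp_level_def by (rule cINF_lower[OF _ \<Gamma>])
qed

lemma integrable_prim_f_trunc:
  assumes k: "0 < k"
  shows "integrable lborel (\<lambda>x. prim f (min (e x) k))"
proof -
  obtain C where C: "C > 0" "\<And>t. 0 \<le> t \<Longrightarrow> t \<le> k \<Longrightarrow> prim f t \<le> C * prim g t"
    using prim_f_le_prim_g[OF k] by auto
  have "integrable lborel (\<lambda>x. prim g \<bar>e x\<bar>)"
  proof (rule integrableI_nonneg)
    show "(\<integral>\<^sup>+ x. ennreal (prim g \<bar>e x\<bar>) \<partial>lborel) < \<infinity>"
      using rho_e_less_top unfolding rho_def Phi_G_def by (auto simp: top_unique)
  qed (auto intro!: borel_measurable_prim_comp prim_nonneg)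
  then have "integrable lborel (\<lambda>x. C * prim g \<bar>e x\<bar>)" by simp
  then show ?thesis
  proof (rule Bochner_Integration.integrable_bound)
    show "(\<lambda>x. prim f (min (e x) k)) \<in> borel_measurable lborel"
      by (rule borel_measurable_prim_f_comp) (use e_nonneg k in auto)
    show "AE x in lborel. norm (prim f (min (e x) k)) \<le> norm (C * prim g \<bar>e x\<bar>)"
    proof (rule AE_I2)
      fix x
      have "prim f (min (e x) k) \<le> C * prim g (min (e x) k)"
        using C(2) e_nonneg[of x] k by simp
      also have "\<dots> \<le> C * prim g \<bar>e x\<bar>"
        using C(1) e_nonneg[of x] k by (intro mult_left_mono prim_mono) auto
      finally show "norm (prim f (min (e x) k)) \<le> norm (C * prim g \<bar>e x\<bar>)"
        using prim_f_nonneg[of "min (e x) k"] C(1) prim_nonneg[of "\<bar>e x\<bar>"] by simp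
    qed
  qed
qed

lemma integral_prim_f_trunc_pos:
  assumes k: "0 < k"
  shows "0 < (\<integral>x. prim f (min (e x) k) \<partial>lborel)"
proof -
  have "(\<integral>x. prim f (min (e x) k) \<partial>lborel) \<noteq> 0"
  proof
    assume "(\<integral>x. prim f (min (e x) k) \<partial>lborel) = 0"
    then have "AE x in lborel. prim f (min (e x) k) = 0"
      using integral_nonneg_eq_0_iff_AE[OF integrable_prim_f_trunc[OF k]] prim_f_nonneg by auto
    then have "AE x in lborel. e x = 0"
    proof (rule AE_mp[OF _ AE_I2], intro impI)
      fix x assume "prim f (min (e x) k) = 0"
      then have "min (e x) k = 0" using prim_f_pos by (metis less_irrefl)
      then show "e x = 0" using k e_nonneg[of x] by (simp add: min_def split: if_splits)
    qed
    with e_nonzero show False by simp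
  qed
  then show ?thesis using integral_prim_f_nonneg[of lborel "\<lambda>x. min (e x) k"] by simp
qed

lemma I_fun_trunc_path_nonpos:
  assumes t: "0 < t1" "t1 \<le> t" "t < 1" and lam: "0 \<le> lam"
    and large: "enn2real (rho (prim g) s e) \<le> lam * (\<integral>x. prim f (min (e x) (t1 / (1 - t1))) \<partial>lborel)"
  shows "I_fun g f s lam (trunc_path e t) \<le> 0"
proof -
  have rho: "rho (prim g) s (trunc_path e t) \<le> rho (prim g) s e"
    using rho_trunc_path_le[of e t s] e_nonneg t by simp
  have "t1 / (1 - t1) \<le> t / (1 - t)"
    using t by (intro frac_le) auto
  then have "(\<integral>x. prim f (min (e x) (t1 / (1 - t1))) \<partial>lborel) \<le> (\<integral>x. prim f (trunc_path e t x) \<partial>lborel)"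
    using t e_nonneg
    by (auto simp: trunc_path_def intro!: integral_mono integrable_prim_f_trunc prim_f_mono)
  then have "enn2real (rho (prim g) s e) \<le> lam * (\<integral>x. prim f (trunc_path e t x) \<partial>lborel)"
    using large lam by (smt (verit) mult_left_mono)
  moreover have "enn2real (rho (prim g) s (trunc_path e t)) \<le> enn2real (rho (prim g) s e)"
    using rho rho_e_less_top by (intro enn2real_mono) auto
  moreover have "I_fun g f s lam (trunc_path e t) \<le>
      enn2real (rho (prim g) s (trunc_path e t)) - lam * (\<integral>x. prim f (trunc_path e t x) \<partial>lborel)"
    using rho rho_e_less_top by (intro I_fun_le) auto
  ultimately show ?thesis by linarith
qed

lemma I_fun_trunc_path_small:
  assumes \<epsilon>: "0 < \<epsilon>"
  obtains t1 where "0 < t1" "t1 < 1"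
    "\<And>t lam. 0 < t \<Longrightarrow> t < t1 \<Longrightarrow> 0 \<le> lam \<Longrightarrow> I_fun g f s lam (trunc_path e t) \<le> \<epsilon>"
proof -
  have "((\<lambda>t. rho (prim g) s (trunc_path e t)) \<longlongrightarrow> 0) (at 0 within {0..1})"
    using rho_trunc_path_diff_tendsto_zero[OF e_measurable rho_e_less_top e_nonneg, of 0 1]
    by (simp add: trunc_path_0[OF e_nonneg])
  then have "eventually (\<lambda>t. rho (prim g) s (trunc_path e t) < ennreal \<epsilon>) (at 0 within {0..1})"
    using \<epsilon> by (intro order_tendstoD(2)) auto
  then obtain d where d: "0 < d"
    "\<And>t. t \<in> {0..1} \<Longrightarrow> t \<noteq> 0 \<Longrightarrow> dist t 0 < d \<Longrightarrow> rho (prim g) s (trunc_path e t) < ennreal \<epsilon>"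
    unfolding eventually_at by blast
  show ?thesis
  proof
    show "0 < min (d / 2) (1 / 2)" "min (d / 2) (1 / 2) < (1::real)" using d by auto
    fix t lam :: real assume t: "0 < t" "t < min (d / 2) (1 / 2)" and lam: "0 \<le> lam"
    then have small: "rho (prim g) s (trunc_path e t) < ennreal \<epsilon>"
      using d by auto
    then have fin: "rho (prim g) s (trunc_path e t) < \<infinity>"
      using ennreal_less_top[of \<epsilon>] unfolding infinity_ennreal_def by (rule order.strict_trans)
    have "I_fun g f s lam (trunc_path e t) \<le> enn2real (rho (prim g) s (trunc_path e t))"
      using fin lam by (rule I_fun_le_rho)
    also have "\<dots> < \<epsilon>"
      using small fin \<epsilon> by (simp add: enn2real_less_iff)
    finally show "I_fun g f s lam (trunc_path e t) \<le> \<epsilon>" by simp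
  qed
qed

lemma I_fun_trunc_path_eventually_le:
  assumes e_neg: "\<exists>lam0. \<forall>lam\<ge>lam0. I_fun g f s lam e < 0" and \<epsilon>: "0 < \<epsilon>"
  shows "eventually (\<lambda>lam. \<forall>t\<in>{0..1}. I_fun g f s lam (trunc_path e t) \<le> \<epsilon>) at_top"
proof -
  obtain t1 where t1: "0 < t1" "t1 < 1"
    and small: "\<And>t lam. 0 < t \<Longrightarrow> t < t1 \<Longrightarrow> 0 \<le> lam \<Longrightarrow> I_fun g f s lam (trunc_path e t) \<le> \<epsilon>"
    using I_fun_trunc_path_small[OF \<epsilon>] by blast
  define c where "c = (\<integral>x. prim f (min (e x) (t1 / (1 - t1))) \<partial>lborel)"
  have c: "0 < c" unfolding c_def using t1 by (intro integral_prim_f_trunc_pos) simp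
  obtain lam0 where lam0: "\<And>lam. lam0 \<le> lam \<Longrightarrow> I_fun g f s lam e < 0" using e_neg by blast
  have "\<forall>t\<in>{0..1}. I_fun g f s lam (trunc_path e t) \<le> \<epsilon>"
    if lam: "max 0 (max lam0 (enn2real (rho (prim g) s e) / c)) \<le> lam" for lam
  proof
    fix t :: real assume t: "t \<in> {0..1}"
    consider "t = 0" | "0 < t" "t < t1" | "t1 \<le> t" "t < 1" | "t = 1"
      using t by fastforce
    then show "I_fun g f s lam (trunc_path e t) \<le> \<epsilon>"
    proof cases
      case 1
      then show ?thesis using \<epsilon> by (simp add: trunc_path_0[OF e_nonneg] I_fun_zero)
    next
      case 2
      then show ?thesis using small lam by simp
    next
      case 3
      have "enn2real (rho (prim g) s e) \<le> lam * c"
        using lam c by (simp add: divide_le_eq mult.commute)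
      then show ?thesis
        using I_fun_trunc_path_nonpos[OF t1(1) 3] lam \<epsilon> unfolding c_def by fastforce
    next
      case 4
      then show ?thesis using lam0[of lam] lam \<epsilon> by (simp add: trunc_path_1)
    qed
  qed
  then show ?thesis
    unfolding eventually_at_top_linorder by blast
qed

lemma mp_level_eventually_le:
  assumes e_neg: "\<exists>lam0. \<forall>lam\<ge>lam0. I_fun g f s lam e < 0" and \<epsilon>: "0 < \<epsilon>"
  shows "eventually (\<lambda>lam. mp_level g f s e lam \<le> \<epsilon>) at_top"
  using I_fun_trunc_path_eventually_le[OF assms] eventually_ge_at_top[of 0]
proof eventually_elim
  case (elim lam)
  then have "(SUP t\<in>{0..1}. I_fun g f s lam (trunc_path e t)) \<le> \<epsilon>"
    by (intro cSUP_least) auto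
  then show ?case using mp_level_nonneg_and_le(2)[OF elim(2)] by linarith
qed

end

theorem lemma4p3:
  fixes g m f :: "real \<Rightarrow> real"
    and s p_minus p_plus m_minus m_plus \<theta> :: real
    and e :: "'a::euclidean_space \<Rightarrow> real"
  assumes N2: "DIM('a) \<ge> 2"
    and s01: "0 < s" "s < 1"
    and g_young: "young_density g"
    and G1: "1 < p_minus" "\<forall>t>0. p_minus \<le> t * g t / prim g t \<and> t * g t / prim g t \<le> p_plus"
    and spN: "s * p_minus < real DIM('a)"
    and G2: "(\<integral>\<^sup>+ t\<in>{1..}. ennreal ((t / prim g t) powr (s / (real DIM('a) - s))) \<partial>lborel) = \<infinity>"
    and G3: "(\<integral>\<^sup>+ t\<in>{0..1}. ennreal ((t / prim g t) powr (s / (real DIM('a) - s))) \<partial>lborel) < \<infinity>"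
    and f_cont: "continuous_on UNIV f"
    and f1: "((\<lambda>t. f t / g \<bar>t\<bar>) \<longlongrightarrow> 0) (at 0)"
    and m_cont: "continuous_on UNIV m"
    and m_young: "young_density m"
    and m_bounds: "0 < m_minus" "\<forall>t>0. m_minus \<le> t * m t / prim m t \<and> t * m t / prim m t \<le> m_plus"
    and m_order: "p_plus < m_minus" "m_minus < m_plus"
        "m_plus < real DIM('a) * p_minus / (real DIM('a) - s * p_minus)"
    and f2: "\<exists>C. eventually (\<lambda>t. \<bar>f t\<bar> / m \<bar>t\<bar> \<le> C) at_infinity"
    and f3: "\<theta> > p_plus" "\<forall>t. t \<noteq> 0 \<longrightarrow> 0 < \<theta> * prim f t \<and> \<theta> * prim f t \<le> f t * t"
    and e_W: "e \<in> Wspace (prim g) s"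
    and e_nonneg: "\<forall>x. 0 \<le> e x"
    and e_norm: "orlicz_norm (GNs g s (real DIM('a))) e > 0"
    and e_neg: "\<exists>lam0>0. \<forall>lam\<ge>lam0. I_fun g f s lam e < 0"
  shows "((\<lambda>lam. mp_level g f s e lam) \<longlongrightarrow> 0) at_top"
proof -
  text \<open>Only the upper growth bound in (G1) is used: the lower one, \<open>s p\<^sup>- < N\<close>, \<open>m\<close> and (f2) are
    needed in the paper for the mountain pass geometry, which is assumed here through \<open>e\<close>.\<close>
  have p_le: "p_minus \<le> p_plus"
    using G1(2) by (meson zero_less_one order_trans)
  interpret young_fun_Delta2 g p_plus
    using g_young G1 p_le by unfold_locales auto
  interpret crit: young_fun_critical g s "real DIM('a)"
    using s01 N2 G2 G3 by unfold_locales auto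
  interpret AR_nonlinearity g f \<theta>
    using f_cont f1 f3 G1(1) p_le by unfold_locales auto
  have "\<not> (AE x in lborel. e x = 0)"
    using e_norm orlicz_norm_eq_zero_if_AE_zero[of "GNs g s (real DIM('a))" e] crit.GNs_zero by auto
  then interpret mp_setting g p_plus f \<theta> s e
    using crit.GNs_nonneg crit.GNs_zero e_W e_nonneg by unfold_locales auto
  have I_e_neg: "\<exists>lam0. \<forall>lam\<ge>lam0. I_fun g f s lam e < 0"
    using e_neg by blast
  show ?thesis
  proof (rule order_tendstoI)
    fix a :: real assume "a < 0"
    show "eventually (\<lambda>lam. a < mp_level g f s e lam) at_top"
      using eventually_ge_at_top[of 0]
    proof eventually_elim
      case (elim lam)
      then show ?case using mp_level_nonneg_and_le(1)[of lam] \<open>a < 0\<close> by linarith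
    qed
  next
    fix a :: real assume "0 < a"
    with mp_level_eventually_le[OF I_e_neg, of "a / 2"]
    show "eventually (\<lambda>lam. mp_level g f s e lam < a) at_top"
      by (auto elim: eventually_mono)
  qed
qed

end
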